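(* Let $(\Delta x,\Delta y)\in\mathbb{R}^2$, $(o_x,o_y)\in\mathbb{R}^2$, $(x_0,y_0,\theta_0)\in\mathbb{R}^3$, $R>0$ and $t_{\max}>0$. Consider the forward left-turning arc robot path $$x(t)=x_0-R\sin\theta_0+R\sin(\theta_0+t),\quad y(t)=y_0+R\cos\theta_0-R\cos(\theta_0+t),\quad \theta(t)=\theta_0+t,\qquad t\in(0,t_{\max}),$$ (an arc of radius $R$ with centre angle $t_{\max}$), and let the anchoring point have world coordinates $\tilde x(t)=x(t)+\cos\theta(t)\Delta x-\sin\theta(t)\Delta y$, $\tilde y(t)=y(t)+\sin\theta(t)\Delta x+\cos\theta(t)\Delta y$, assumed different from $(o_x,o_y)$ for all $t$. Define $$A=o_x-x_0+R\sin\theta_0,\quad B=o_y-y_0-R\cos\theta_0,\quad C=A\Delta x-BR+B\Delta y,\quad D=AR-A\Delta y+B\Delta x,$$ assume $(C,D)\neq(0,0)$, and let $\varphi$ be the angle with $\cos\varphi=\frac{C}{\sqrt{C^2+D^2}}$, $\sin\varphi=\frac{D}{\sqrt{C^2+D^2}}$. If either $$\frac{A^2+B^2}{\sqrt{C^2+D^2}}>\cos(t+\theta_0-\varphi)\ \text{ for all } t\in(0,t_{\max}),$$ or $$\frac{A^2+B^2}{\sqrt{C^2+D^2}}<\cos(t+\theta_0-\varphi)\ \text{ for all } t\in(0,t_{\max}),$$ then the relative angle function $\Phi(t)=\arctan\left(\frac{o_y-\tilde y(t)}{o_x-\tilde x(t)}\right)-\theta(t)$ is monotonic on $(0,t_{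\max})$.
   Context: $(\Delta x,\Delta y)$ is the position of the tether–robot anchoring point $s$ in the robot's egocentric frame, and $(o_x,o_y)$ is the (fixed) position of the last tether–obstacle contact point $o$ in the world frame. In $\Phi$, $\arctan\left(\frac{o_y-\tilde y}{o_x-\tilde x}\right)$ denotes the direction angle of the vector from $(\tilde x,\tilde y)$ to $(o_x,o_y)$, taken as a continuous (differentiable) branch along the path. *)

theory Defs
  imports "HOL-Analysis.Analysis"
begin

definition arc_x :: "real \<Rightarrow> real \<Rightarrow> real \<Rightarrow> real \<Rightarrow> real" where
  "arc_x x0 \<theta>0 R t = x0 - R * sin \<theta>0 + R * sin (\<theta>0 + t)"

definition arc_y :: "real \<Rightarrow> real \<Rightarrow> real \<Rightarrow> real \<Rightarrow> real" where
  "arc_y y0 \<theta>0 R t = y0 + R * cos \<theta>0 - R * cos (\<theta>0 + t)"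

definition arc_theta :: "real \<Rightarrow> real \<Rightarrow> real" where
  "arc_theta \<theta>0 t = \<theta>0 + t"

definition anchor_x :: "real \<Rightarrow> real \<Rightarrow> real \<Rightarrow> real \<Rightarrow> real \<Rightarrow> real \<Rightarrow> real" where
  "anchor_x dx dy x0 \<theta>0 R t =
     arc_x x0 \<theta>0 R t + cos (arc_theta \<theta>0 t) * dx - sin (arc_theta \<theta>0 t) * dy"

definition anchor_y :: "real \<Rightarrow> real \<Rightarrow> real \<Rightarrow> real \<Rightarrow> real \<Rightarrow> real \<Rightarrow> real" where
  "anchor_y dx dy y0 \<theta>0 R t =
     arc_y y0 \<theta>0 R t + sin (arc_theta \<theta>0 t) * dx + cos (arc_theta \<theta>0 t) * dy"

end

theory Submission
  imports Defs
begin

text \<open>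
  If \<open>(u, v)\<close> is the vector from the anchor to \<open>o\<close> and \<open>\<alpha>\<close> a continuous polar angle of it,
  then \<open>\<alpha>' = (u v' - v u') / (u\<^sup>2 + v\<^sup>2)\<close>. Along the arc the numerator of \<open>\<Phi>' = \<alpha>' - 1\<close>
  collapses to \<open>C cos \<theta> + D sin \<theta> - (A\<^sup>2 + B\<^sup>2) = \<surd>(C\<^sup>2 + D\<^sup>2) cos (\<theta> - \<phi>) - (A\<^sup>2 + B\<^sup>2)\<close>
  (the terms quadratic in the offsets cancel), so either hypothesis fixes the sign of \<open>\<Phi>'\<close>
  on the whole interval, and the mean value theorem gives monotonicity.
\<close>

lemma arg_eq_add_arctan_rotated:
  fixes r \<beta> a :: real
  assumes "r > 0" and "\<bar>\<beta> - a\<bar> < pi / 2"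
  shows "\<beta> = a + arctan ((r * sin \<beta> * cos a - r * cos \<beta> * sin a) /
                           (r * cos \<beta> * cos a + r * sin \<beta> * sin a))"
proof -
  have "(r * sin \<beta> * cos a - r * cos \<beta> * sin a) / (r * cos \<beta> * cos a + r * sin \<beta> * sin a)
        = (r * sin (\<beta> - a)) / (r * cos (\<beta> - a))"
    unfolding sin_diff cos_diff by (simp add: algebra_simps)
  also have "\<dots> = tan (\<beta> - a)"
    using assms(1) by (simp add: tan_def)
  also have "arctan (tan (\<beta> - a)) = \<beta> - a"
    using assms(2) unfolding abs_less_iff by (intro arctan_tan) auto
  finally show ?thesis by simp
qed

lemma polar_sum_squares:
  fixes r \<beta> :: real
  shows "(r * cos \<beta>)\<^sup>2 + (r * sin \<beta>)\<^sup>2 = r\<^sup>2"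
  by (simp add: power_mult_distrib flip: distrib_left)

lemma polar_angle_has_real_derivative:
  fixes u v \<alpha> :: "real \<Rightarrow> real"
  assumes "open S" and "t0 \<in> S" and "continuous_on S \<alpha>"
    and polar: "\<And>t. t \<in> S \<Longrightarrow> \<exists>r>0. u t = r * cos (\<alpha> t) \<and> v t = r * sin (\<alpha> t)"
    and u': "(u has_real_derivative u') (at t0)" and v': "(v has_real_derivative v') (at t0)"
  shows "(\<alpha> has_real_derivative (u t0 * v' - v t0 * u') / ((u t0)\<^sup>2 + (v t0)\<^sup>2)) (at t0)"
proof -
  \<comment> \<open>Near \<open>t0\<close> the angle stays within \<open>\<pi>/2\<close> of \<open>a = \<alpha> t0\<close>, so it is \<open>a\<close> plus the arctan
      of the slope of \<open>(u, v)\<close> rotated by \<open>-a\<close>, which is differentiable.\<close>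
  define a where "a = \<alpha> t0"
  obtain r0 where r0: "r0 > 0" "u t0 = r0 * cos a" "v t0 = r0 * sin a"
    using polar assms(2) unfolding a_def by blast
  have "isCont \<alpha> t0"
    using assms(1-3) continuous_on_eq_continuous_at by blast
  then obtain e where "e > 0" and e: "\<And>t. dist t t0 < e \<Longrightarrow> \<bar>\<alpha> t - a\<bar> < pi / 2"
    unfolding continuous_at_eps_delta a_def dist_real_def by (meson pi_half_gt_zero)
  define T where "T = S \<inter> ball t0 e"
  have T: "open T" "t0 \<in> T"
    using assms(1,2) \<open>e > 0\<close> by (auto simp: T_def)
  define f where "f t = u t * cos a + v t * sin a" for t
  define g where "g t = v t * cos a - u t * sin a" for t
  have local_arctan: "\<alpha> t = a + arctan (g t / f t)" if "t \<in> T" for t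
  proof -
    obtain r where "r > 0" "u t = r * cos (\<alpha> t)" "v t = r * sin (\<alpha> t)"
      using polar \<open>t \<in> T\<close> by (auto simp: T_def)
    moreover have "\<bar>\<alpha> t - a\<bar> < pi / 2"
      using e \<open>t \<in> T\<close> by (auto simp: T_def dist_commute)
    ultimately show ?thesis
      unfolding f_def g_def by (auto intro: arg_eq_add_arctan_rotated)
  qed
  have f0: "f t0 = r0" and g0: "g t0 = 0"
    unfolding f_def g_def r0 by (simp_all add: algebra_simps flip: power2_eq_square distrib_left)
  have "((\<lambda>t. a + arctan (g t / f t)) has_real_derivative (v' * cos a - u' * sin a) / r0) (at t0)"
  proof -
    have "(f has_real_derivative u' * cos a + v' * sin a) (at t0)"
      and "(g has_real_derivative v' * cos a - u' * sin a) (at t0)"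
      unfolding f_def g_def by (auto intro!: derivative_eq_intros u' v')
    then show ?thesis
      using \<open>r0 > 0\<close> by (auto intro!: derivative_eq_intros simp: f0 g0)
  qed
  then have "(\<alpha> has_real_derivative (v' * cos a - u' * sin a) / r0) (at t0)"
    by (rule has_field_derivative_transform_within_open[OF _ T]) (simp add: local_arctan)
  moreover have "(u t0)\<^sup>2 + (v t0)\<^sup>2 = r0\<^sup>2"
    unfolding r0 by (rule polar_sum_squares)
  moreover have "u t0 * v' - v t0 * u' = r0 * (v' * cos a - u' * sin a)"
    unfolding r0 by (simp add: algebra_simps)
  ultimately show ?thesis
    using \<open>r0 > 0\<close> by (simp add: power2_eq_square)
qed

lemma mono_on_if_has_real_derivative_nonneg:
  fixes f f' :: "real \<Rightarrow> real"
  assumes "is_interval S"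
    and f': "\<And>t. t \<in> S \<Longrightarrow> (f has_real_derivative f' t) (at t)"
    and nonneg: "\<And>t. t \<in> S \<Longrightarrow> f' t \<ge> 0"
  shows "mono_on S f"
proof (rule mono_onI)
  fix x y assume "x \<in> S" "y \<in> S" "x \<le> y"
  show "f x \<le> f y"
  proof (rule DERIV_nonneg_imp_nondecreasing[OF \<open>x \<le> y\<close>])
    fix z assume "x \<le> z" "z \<le> y"
    with \<open>is_interval S\<close> \<open>x \<in> S\<close> \<open>y \<in> S\<close> have "z \<in> S"
      unfolding is_interval_1 by blast
    then show "\<exists>d. (f has_real_derivative d) (at z) \<and> d \<ge> 0"
      using f' nonneg by blast
  qed
qed

lemma antimono_on_if_has_real_derivative_nonpos:
  fixes f f' :: "real \<Rightarrow> real"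
  assumes "is_interval S"
    and f': "\<And>t. t \<in> S \<Longrightarrow> (f has_real_derivative f' t) (at t)"
    and nonpos: "\<And>t. t \<in> S \<Longrightarrow> f' t \<le> 0"
  shows "antimono_on S f"
proof -
  have "mono_on S (\<lambda>t. - f t)"
    using assms(1) by (rule mono_on_if_has_real_derivative_nonneg)
      (use f' nonpos in \<open>auto intro!: derivative_eq_intros\<close>)
  then show ?thesis
    by (simp add: monotone_on_def)
qed

lemma mono_on_or_antimono_on_if_has_real_derivative_sign:
  fixes f f' :: "real \<Rightarrow> real"
  assumes "is_interval S"
    and "\<And>t. t \<in> S \<Longrightarrow> (f has_real_derivative f' t) (at t)"
    and "(\<forall>t\<in>S. f' t \<le> 0) \<or> (\<forall>t\<in>S. f' t \<ge> 0)"
  shows "mono_on S f \<or> antimono_on S f"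
  using assms mono_on_if_has_real_derivative_nonneg antimono_on_if_has_real_derivative_nonpos
  by metis

lemma sqrt_sum_squares_mul_cos_diff:
  fixes C D \<phi> x :: real
  assumes "cos \<phi> = C / sqrt (C\<^sup>2 + D\<^sup>2)" and "sin \<phi> = D / sqrt (C\<^sup>2 + D\<^sup>2)"
  shows "sqrt (C\<^sup>2 + D\<^sup>2) * cos (x - \<phi>) = C * cos x + D * sin x"
proof (cases "C = 0 \<and> D = 0")
  case False
  then have "sqrt (C\<^sup>2 + D\<^sup>2) \<noteq> 0"
    by (simp add: sum_power2_eq_zero_iff)
  then show ?thesis
    unfolding cos_diff assms by (simp add: field_simps)
qed simp

lemma anchor_offset_x:
  "ox - anchor_x dx dy x0 \<theta>0 R t
     = (ox - x0 + R * sin \<theta>0) - dx * cos (\<theta>0 + t) - (R - dy) * sin (\<theta>0 + t)"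
  unfolding anchor_x_def arc_x_def arc_theta_def by (simp add: algebra_simps)

lemma anchor_offset_y:
  "oy - anchor_y dx dy y0 \<theta>0 R t
     = (oy - y0 - R * cos \<theta>0) - dx * sin (\<theta>0 + t) + (R - dy) * cos (\<theta>0 + t)"
  unfolding anchor_y_def arc_y_def arc_theta_def by (simp add: algebra_simps)

lemma relative_angle_has_real_derivative:
  fixes dx dy ox oy x0 y0 \<theta>0 R t :: real and \<alpha> :: "real \<Rightarrow> real"
  defines "u \<equiv> \<lambda>t. ox - anchor_x dx dy x0 \<theta>0 R t"
    and "v \<equiv> \<lambda>t. oy - anchor_y dx dy y0 \<theta>0 R t"
    and "A \<equiv> ox - x0 + R * sin \<theta>0" and "B \<equiv> oy - y0 - R * cos \<theta>0"
  assumes S: "open S" "t \<in> S" and cont: "continuous_on S \<alpha>"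
    and polar: "\<And>t. t \<in> S \<Longrightarrow> \<exists>r>0. u t = r * cos (\<alpha> t) \<and> v t = r * sin (\<alpha> t)"
  shows "((\<lambda>t. \<alpha> t - arc_theta \<theta>0 t) has_real_derivative
           ((A * dx - B * R + B * dy) * cos (\<theta>0 + t) + (A * R - A * dy + B * dx) * sin (\<theta>0 + t)
             - (A\<^sup>2 + B\<^sup>2)) / ((u t)\<^sup>2 + (v t)\<^sup>2)) (at t)"
proof -
  define c s where "c = cos (\<theta>0 + t)" and "s = sin (\<theta>0 + t)"
  define u' v' where "u' = dx * s - (R - dy) * c" and "v' = - dx * c - (R - dy) * s"
  have u: "u = (\<lambda>t. A - dx * cos (\<theta>0 + t) - (R - dy) * sin (\<theta>0 + t))"
    and v: "v = (\<lambda>t. B - dx * sin (\<theta>0 + t) + (R - dy) * cos (\<theta>0 + t))"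
    unfolding u_def v_def A_def B_def anchor_offset_x anchor_offset_y by simp_all
  obtain r where "r > 0" "u t = r * cos (\<alpha> t)" "v t = r * sin (\<alpha> t)"
    using polar S(2) by blast
  then have N: "(u t)\<^sup>2 + (v t)\<^sup>2 \<noteq> 0"
    by (simp add: polar_sum_squares)
  have "(u has_real_derivative u') (at t)" "(v has_real_derivative v') (at t)"
    unfolding u v u'_def v'_def c_def s_def by (auto intro!: derivative_eq_intros)
  then have "((\<lambda>t. \<alpha> t - arc_theta \<theta>0 t) has_real_derivative
      (u t * v' - v t * u') / ((u t)\<^sup>2 + (v t)\<^sup>2) - 1) (at t)"
    using polar_angle_has_real_derivative[OF S cont polar]
    unfolding arc_theta_def by (auto intro!: derivative_eq_intros)
  also have "(u t * v' - v t * u') / ((u t)\<^sup>2 + (v t)\<^sup>2) - 1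
      = (u t * v' - v t * u' - ((u t)\<^sup>2 + (v t)\<^sup>2)) / ((u t)\<^sup>2 + (v t)\<^sup>2)"
    using N by (simp add: diff_divide_distrib)
  also have "u t * v' - v t * u' - ((u t)\<^sup>2 + (v t)\<^sup>2)
      = (A * dx - B * R + B * dy) * c + (A * R - A * dy + B * dx) * s - (A\<^sup>2 + B\<^sup>2)"
    unfolding u v u'_def v'_def c_def [symmetric] s_def [symmetric]
    by (simp add: power2_eq_square algebra_simps)
  finally show ?thesis
    unfolding c_def s_def .
qed

theorem theorem3:
  fixes dx dy ox oy x0 y0 \<theta>0 R tmax A B C D \<phi> :: real
    and \<alpha> :: "real \<Rightarrow> real"
  assumes R_pos: "R > 0" and tmax_pos: "tmax > 0"
    and anchor_ne: "\<forall>t\<in>{0<..<tmax}.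
         (anchor_x dx dy x0 \<theta>0 R t, anchor_y dx dy y0 \<theta>0 R t) \<noteq> (ox, oy)"
    and A_def: "A = ox - x0 + R * sin \<theta>0"
    and B_def: "B = oy - y0 - R * cos \<theta>0"
    and C_def: "C = A * dx - B * R + B * dy"
    and D_def: "D = A * R - A * dy + B * dx"
    and CD_nz: "(C, D) \<noteq> (0, 0)"
    and phi_cos: "cos \<phi> = C / sqrt (C\<^sup>2 + D\<^sup>2)"
    and phi_sin: "sin \<phi> = D / sqrt (C\<^sup>2 + D\<^sup>2)"
    and alpha_cont: "continuous_on {0<..<tmax} \<alpha>"
    and alpha_dir: "\<forall>t\<in>{0<..<tmax}. \<exists>r>0.
         ox - anchor_x dx dy x0 \<theta>0 R t = r * cos (\<alpha> t) \<and>
         oy - anchor_y dx dy y0 \<theta>0 R t = r * sin (\<alpha> t)"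
    and cond: "(\<forall>t\<in>{0<..<tmax}. (A\<^sup>2 + B\<^sup>2) / sqrt (C\<^sup>2 + D\<^sup>2) > cos (t + \<theta>0 - \<phi>))
             \<or> (\<forall>t\<in>{0<..<tmax}. (A\<^sup>2 + B\<^sup>2) / sqrt (C\<^sup>2 + D\<^sup>2) < cos (t + \<theta>0 - \<phi>))"
  shows "mono_on {0<..<tmax} (\<lambda>t. \<alpha> t - arc_theta \<theta>0 t)
       \<or> antimono_on {0<..<tmax} (\<lambda>t. \<alpha> t - arc_theta \<theta>0 t)"
proof -
  let ?S = "{0<..<tmax}"
  let ?N = "\<lambda>t. (ox - anchor_x dx dy x0 \<theta>0 R t)\<^sup>2 + (oy - anchor_y dx dy y0 \<theta>0 R t)\<^sup>2"
  define K where "K = sqrt (C\<^sup>2 + D\<^sup>2)"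
  let ?\<Phi>' = "\<lambda>t. K * (cos (t + \<theta>0 - \<phi>) - (A\<^sup>2 + B\<^sup>2) / K) / ?N t"
  have K_pos: "K > 0"
    using CD_nz by (simp add: K_def sum_power2_gt_zero_iff)
  have N_pos: "?N t > 0" if "t \<in> ?S" for t
    using alpha_dir that by (force simp: polar_sum_squares)
  have "((\<lambda>t. \<alpha> t - arc_theta \<theta>0 t) has_real_derivative ?\<Phi>' t) (at t)" if "t \<in> ?S" for t
  proof -
    have "((\<lambda>t. \<alpha> t - arc_theta \<theta>0 t) has_real_derivative
        (C * cos (\<theta>0 + t) + D * sin (\<theta>0 + t) - (A\<^sup>2 + B\<^sup>2)) / ?N t) (at t)"
      unfolding C_def D_def A_def B_def
      by (rule relative_angle_has_real_derivative) (use that alpha_cont alpha_dir in auto)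
    moreover have "C * cos (\<theta>0 + t) + D * sin (\<theta>0 + t) = K * cos (t + \<theta>0 - \<phi>)"
      using sqrt_sum_squares_mul_cos_diff[OF phi_cos phi_sin, of "\<theta>0 + t"] by (simp add: K_def add.commute)
    ultimately show ?thesis
      using K_pos by (simp add: right_diff_distrib)
  qed
  moreover have "(\<forall>t\<in>?S. ?\<Phi>' t \<le> 0) \<or> (\<forall>t\<in>?S. ?\<Phi>' t \<ge> 0)"
    using cond K_pos N_pos unfolding K_def[symmetric]
    by (elim disj_forward) (auto intro!: divide_nonneg_pos divide_nonpos_pos mult_nonneg_nonneg mult_nonneg_nonpos)
  ultimately show ?thesis
    by (intro mono_on_or_antimono_on_if_has_real_derivative_sign) (auto simp: is_interval_1)
qed

end
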